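(* Let $K$ be a number field and let $(a,b,c)$ be a triplet of positive integers with $c=\mathrm{lcm}(a,b)\cdot t$ for some positive integer $t\mid\gcd(a,b)$. Then $(a,b,c)$ is irreducible (as an element of $\mathcal C_K$) if and only if it is one of $(1,1,1)$, $(1,p,p)$, $(p,1,p)$, $(p,p,p)$ for some prime $p$.
   Context: Extensions are finite and inside a fixed algebraic closure $\bar K$. A triplet $(a,b,c)$ of positive integers is compositum feasible over $K$ if there exist extensions $L/K$, $L'/K$ of degrees $a$ and $b$ whose compositum has degree $c$ over $K$; $\mathcal C_K$ is the set of such triplets (every triplet $(a,b,c)$ with $c=\mathrm{lcm}(a,b)t$, $t\mid\gcd(a,b)$, lies in $\mathcal C_K$ when $K$ is a number field). A triplet $(a,b,c)\in\mathcal C_K$ is reducible if $(a,b,c)=(a_1a_2,b_1b_2,c_1c_2)$ with $(a_1,b_1,c_1),(a_2,b_2,c_2)\in\mathcal C_K\setminus\{(1,1,1)\}$, and irreducible otherwise. *)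

theory Defs
  imports Complex_Main "HOL-Computational_Algebra.Primes"
begin

text \<open>We work inside the fixed algebraic closure given by the complex numbers:
  every number field embeds into \<complex>, and the finite extensions of K inside an
  algebraic closure correspond to the subfields of \<complex> that are finite over K.\<close>

definition subfield_C :: "complex set \<Rightarrow> bool" where
  "subfield_C S \<longleftrightarrow> 0 \<in> S \<and> 1 \<in> S \<and>
     (\<forall>x\<in>S. \<forall>y\<in>S. x + y \<in> S \<and> x - y \<in> S \<and> x * y \<in> S) \<and>
     (\<forall>x\<in>S. x \<noteq> 0 \<longrightarrow> inverse x \<in> S)"

definition ext_degree :: "complex set \<Rightarrow> complex set \<Rightarrow> nat \<Rightarrow> bool" where
  "ext_degree K L n \<longleftrightarrow> subfield_C K \<and> subfield_C L \<and> K \<subseteq> L \<and>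
     (\<exists>v :: nat \<Rightarrow> complex. (\<forall>i<n. v i \<in> L) \<and>
        (\<forall>x\<in>L. \<exists>c. (\<forall>i<n. c i \<in> K) \<and> x = (\<Sum>i<n. c i * v i)) \<and>
        (\<forall>c. (\<forall>i<n. c i \<in> K) \<and> (\<Sum>i<n. c i * v i) = 0 \<longrightarrow> (\<forall>i<n. c i = 0)))"

definition number_field :: "complex set \<Rightarrow> bool" where
  "number_field K \<longleftrightarrow> (\<exists>n. ext_degree (\<rat> :: complex set) K n)"

definition compositum :: "complex set \<Rightarrow> complex set \<Rightarrow> complex set" where
  "compositum L L' = \<Inter> {F. subfield_C F \<and> L \<union> L' \<subseteq> F}"

definition compositum_feasible :: "complex set \<Rightarrow> (nat \<times> nat \<times> nat) set" where
  "compositum_feasible K = {(a, b, c). \<exists>L L'. ext_degree K L a \<and> ext_degree K L' b \<and>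
       ext_degree K (compositum L L') c}"

definition triplet_mult :: "nat \<times> nat \<times> nat \<Rightarrow> nat \<times> nat \<times> nat \<Rightarrow> nat \<times> nat \<times> nat" where
  "triplet_mult x y = (case x of (a1, b1, c1) \<Rightarrow> case y of (a2, b2, c2) \<Rightarrow> (a1 * a2, b1 * b2, c1 * c2))"

definition triplet_reducible :: "complex set \<Rightarrow> nat \<times> nat \<times> nat \<Rightarrow> bool" where
  "triplet_reducible K x \<longleftrightarrow> x \<in> compositum_feasible K \<and>
     (\<exists>y z. y \<in> compositum_feasible K - {(1, 1, 1)} \<and> z \<in> compositum_feasible K - {(1, 1, 1)} \<and>
            x = triplet_mult y z)"

definition triplet_irreducible :: "complex set \<Rightarrow> nat \<times> nat \<times> nat \<Rightarrow> bool" where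
  "triplet_irreducible K x \<longleftrightarrow> x \<in> compositum_feasible K \<and> \<not> triplet_reducible K x"

end

theory Submission
  imports Defs "HOL-Algebra.Finite_Extensions" "HOL-Computational_Algebra.Fundamental_Theorem_Algebra"
begin

text \<open>
  Over a number field every triplet \<open>(x, y, lcm x y)\<close> is compositum feasible. Fields of any degree
  over a finite extension \<open>F\<close> of \<open>\<rat>\<close> exist: for a prime \<open>p\<close>, pick \<open>\<sigma> \<in> F\<close> with
  \<open>\<sigma> ^ (p ^ j) = 2\<close> and \<open>j\<close> maximal; then \<open>X ^ p - \<sigma>\<close> is irreducible over \<open>F\<close>. Taking \<open>E\<close> of
  degree \<open>g = gcd x y\<close> over \<open>K\<close> and extensions \<open>L, L'\<close> of \<open>E\<close> of the coprime degrees \<open>x / g\<close>,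
  \<open>y / g\<close>, the compositum \<open>M\<close> satisfies \<open>(x / g) [M : L] = (y / g) [M : L']\<close> and
  \<open>[M : L] \<le> y / g\<close>, hence has degree \<open>lcm x y\<close> over \<open>K\<close>.

  Such triplets factor \<open>(a, b, lcm a b \<cdot> t)\<close> nontrivially as soon as \<open>a \<noteq> 1\<close> and not both
  \<open>b dvd a\<close> and \<open>t = 1\<close> (or symmetrically), which leaves \<open>(1, n, n)\<close>, \<open>(n, 1, n)\<close> and \<open>(n, n, n)\<close>;
  these split further when \<open>n\<close> is composite. Conversely, the third components multiply, and a
  feasible triplet with third component \<open>1\<close> is \<open>(1, 1, 1)\<close>, so \<open>c\<close> prime forbids a factorization.
\<close>

hide_const (open) Divisibility.prime

section \<open>Subfields of \<open>\<complex>\<close> and their degrees\<close>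

definition complex_ring :: "complex ring" where
  "complex_ring = \<lparr>carrier = UNIV, monoid.mult = (*), one = 1, ring.zero = 0, add = (+)\<rparr>"

lemma complex_ring_simps [simp]:
  "carrier complex_ring = UNIV" "mult complex_ring = (*)" "one complex_ring = 1"
  "zero complex_ring = 0" "add complex_ring = (+)"
  by (simp_all add: complex_ring_def)

lemma field_complex_ring: "field complex_ring"
proof -
  have "\<exists>y. x + y = 0" for x :: complex
    using add.right_inverse by blast
  moreover have "x \<noteq> 0 \<Longrightarrow> \<exists>y. x * y = 1" for x :: complex
    by (rule exI[of _ "inverse x"]) auto
  ultimately show ?thesis
    unfolding complex_ring_def by unfold_locales (auto simp: algebra_simps Units_def)
qed

interpretation C: domain complex_ring
  using field_complex_ring by (rule field.axioms(1))

lemma complex_ring_a_inv [simp]: "a_inv complex_ring x = - x"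
  by (rule C.minus_equality) auto

lemma complex_ring_pow [simp]: "x [^]\<^bsub>complex_ring\<^esub> (n::nat) = x ^ n"
  by (induction n) (auto simp: mult.commute)

lemma complex_ring_m_inv [simp]: "x \<noteq> 0 \<Longrightarrow> m_inv complex_ring x = inverse x"
  using C.inv_unique'[of x "inverse x"] field.field_Units[OF field_complex_ring] by (simp add: m_inv_def)

lemma subfield_C_iff_subfield: "subfield_C S \<longleftrightarrow> subfield S complex_ring"
proof
  assume S: "subfield_C S"
  have "subring S complex_ring"
    using S unfolding subfield_C_def by (intro C.subringI) auto
  then show "subfield S complex_ring"
    using S unfolding subfield_C_def by (intro field.subfieldI'[OF field_complex_ring]) auto
next
  assume S: "subfield S complex_ring"
  then have sr: "subring S complex_ring"
    by (rule subfieldE(1))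
  have "inverse x \<in> S" if "x \<in> S" "x \<noteq> 0" for x
  proof -
    have "x \<in> Units (complex_ring\<lparr>carrier := S\<rparr>)"
      using subfield.subfield_Units[OF S] that by auto
    then obtain y where "y \<in> S" "x * y = 1"
      unfolding Units_def by auto
    then show ?thesis
      using inverse_unique[of x y] by simp
  qed
  moreover have "x - y \<in> S" if "x \<in> S" "y \<in> S" for x y
    using subringE(5)[OF sr, of y] subringE(7)[OF sr, of x "- y"] that by simp
  ultimately show "subfield_C S"
    using subringE(2,3,6,7)[OF sr] unfolding subfield_C_def by auto
qed

lemma combine_eq_sum_nth:
  "C.combine Ks Us = (\<Sum>i < min (length Ks) (length Us). Ks ! i * Us ! i)"
proof (induction Ks arbitrary: Us)
  case (Cons k Ks)
  show ?case
  proof (cases Us)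
    case (Cons u Us')
    then have "min (length (k # Ks)) (length Us) = Suc (min (length Ks) (length Us'))"
      by simp
    then show ?thesis
      using Cons Cons.IH[of Us'] by (simp only: sum.lessThan_Suc_shift) simp
  qed simp
qed simp

lemma combine_map_upt: "C.combine (map c [0..<n]) (map v [0..<n]) = (\<Sum>i<n. c i * v i)"
  by (simp add: combine_eq_sum_nth)

lemma mem_Span_map_upt_iff:
  assumes "subfield K complex_ring"
  shows "x \<in> C.Span K (map v [0..<n]) \<longleftrightarrow> (\<exists>c. (\<forall>i<n. c i \<in> K) \<and> x = (\<Sum>i<n. c i * v i))"
proof -
  have "set (map v [0..<n]) \<subseteq> carrier complex_ring"
    by simp
  note Span_iff = C.Span_mem_iff_length_version[OF assms this]
  show ?thesis
  proof
    assume "x \<in> C.Span K (map v [0..<n])"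
    then obtain Ks where "set Ks \<subseteq> K" "length Ks = n" "x = C.combine Ks (map v [0..<n])"
      unfolding Span_iff by auto
    then show "\<exists>c. (\<forall>i<n. c i \<in> K) \<and> x = (\<Sum>i<n. c i * v i)"
      by (intro exI[of _ "(!) Ks"]) (auto simp: combine_eq_sum_nth)
  next
    assume "\<exists>c. (\<forall>i<n. c i \<in> K) \<and> x = (\<Sum>i<n. c i * v i)"
    then obtain c where "\<forall>i<n. c i \<in> K" "x = C.combine (map c [0..<n]) (map v [0..<n])"
      by (auto simp: combine_map_upt)
    then show "x \<in> C.Span K (map v [0..<n])"
      unfolding Span_iff by (intro exI[of _ "map c [0..<n]"]) auto
  qed
qed

lemma independent_map_upt_iff:
  assumes "subfield K complex_ring"
  shows "C.independent K (map v [0..<n]) \<longleftrightarrow>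
    (\<forall>c. (\<forall>i<n. c i \<in> K) \<and> (\<Sum>i<n. c i * v i) = 0 \<longrightarrow> (\<forall>i<n. c i = 0))"
proof
  assume ind: "C.independent K (map v [0..<n])"
  show "\<forall>c. (\<forall>i<n. c i \<in> K) \<and> (\<Sum>i<n. c i * v i) = 0 \<longrightarrow> (\<forall>i<n. c i = 0)"
  proof (rule allI, rule impI)
    fix c assume c: "(\<forall>i<n. c i \<in> K) \<and> (\<Sum>i<n. c i * v i) = 0"
    then have "set (map c [0..<n]) \<subseteq> K"
      by auto
    moreover have "C.combine (map c [0..<n]) (map v [0..<n]) = \<zero>\<^bsub>complex_ring\<^esub>"
      using c by (simp add: combine_map_upt)
    ultimately have "set (take (length (map v [0..<n])) (map c [0..<n])) \<subseteq> {\<zero>\<^bsub>complex_ring\<^esub>}"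
      by (rule C.independent_imp_trivial_combine[OF assms ind])
    then show "\<forall>i<n. c i = 0"
      by (auto simp: image_subset_iff)
  qed
next
  assume triv: "\<forall>c. (\<forall>i<n. c i \<in> K) \<and> (\<Sum>i<n. c i * v i) = 0 \<longrightarrow> (\<forall>i<n. c i = 0)"
  show "C.independent K (map v [0..<n])"
  proof (rule C.trivial_combine_imp_independent[OF assms])
    fix Ks assume Ks: "set Ks \<subseteq> K" "C.combine Ks (map v [0..<n]) = \<zero>\<^bsub>complex_ring\<^esub>"
    define c where "c i = (if i < length Ks then Ks ! i else 0)" for i
    have "(\<Sum>i<n. c i * v i) = (\<Sum>i < min (length Ks) n. Ks ! i * v i)"
      unfolding c_def by (intro sum.mono_neutral_cong_right) auto
    also have "\<dots> = 0"
      using Ks(2) by (simp add: combine_eq_sum_nth)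
    finally have "(\<Sum>i<n. c i * v i) = 0" .
    moreover have "Ks ! i \<in> K" if "i < length Ks" for i
      using Ks(1) nth_mem[OF that] by blast
    then have "\<forall>i<n. c i \<in> K"
      using subringE(2)[OF subfieldE(1)[OF assms]] by (simp add: c_def)
    ultimately have "\<forall>i<n. c i = 0"
      using triv by blast
    then show "set (take (length (map v [0..<n])) Ks) \<subseteq> {\<zero>\<^bsub>complex_ring\<^esub>}"
      by (auto simp: c_def set_conv_nth)
  qed simp
qed

lemma dimension_iff_basis:
  assumes "subfield K complex_ring"
  shows "C.dimension n K L \<longleftrightarrow>
    (\<exists>v. C.Span K (map v [0..<n]) = L \<and> C.independent K (map v [0..<n]))"
proof
  assume "C.dimension n K L"
  then obtain Vs where "C.independent K Vs" "length Vs = n" "C.Span K Vs = L"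
    using C.exists_base[OF assms] by blast
  moreover have "Vs = map ((!) Vs) [0..<length Vs]"
    by (simp add: map_nth)
  ultimately show "\<exists>v. C.Span K (map v [0..<n]) = L \<and> C.independent K (map v [0..<n])"
    by metis
next
  assume "\<exists>v. C.Span K (map v [0..<n]) = L \<and> C.independent K (map v [0..<n])"
  then show "C.dimension n K L"
    using C.dimensionI[OF assms] by fastforce
qed

lemma subring_sum_closed:
  assumes "subring S complex_ring" "\<And>i. i < (n::nat) \<Longrightarrow> f i \<in> S"
  shows "(\<Sum>i<n. f i) \<in> S"
  using assms(2) subringE(2,7)[OF assms(1)] by (induction n) simp_all

lemma Span_map_upt_eq_iff:
  assumes K: "subfield K complex_ring" and L: "subfield L complex_ring" and "K \<subseteq> L"
  shows "C.Span K (map v [0..<n]) = L \<longleftrightarrow>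
    (\<forall>i<n. v i \<in> L) \<and> (\<forall>x\<in>L. \<exists>c. (\<forall>i<n. c i \<in> K) \<and> x = (\<Sum>i<n. c i * v i))"
proof
  assume span: "C.Span K (map v [0..<n]) = L"
  then have "\<forall>i<n. v i \<in> L"
    using C.Span_base_incl[OF K, of "map v [0..<n]"] by auto
  moreover have "\<forall>x\<in>L. \<exists>c. (\<forall>i<n. c i \<in> K) \<and> x = (\<Sum>i<n. c i * v i)"
    using span mem_Span_map_upt_iff[OF K] by blast
  ultimately show "(\<forall>i<n. v i \<in> L) \<and> (\<forall>x\<in>L. \<exists>c. (\<forall>i<n. c i \<in> K) \<and> x = (\<Sum>i<n. c i * v i))"
    by blast
next
  assume basis: "(\<forall>i<n. v i \<in> L) \<and> (\<forall>x\<in>L. \<exists>c. (\<forall>i<n. c i \<in> K) \<and> x = (\<Sum>i<n. c i * v i))"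
  have "(\<Sum>i<n. c i * v i) \<in> L" if "\<forall>i<n. c i \<in> K" for c
    using that basis \<open>K \<subseteq> L\<close> subringE(6)[OF subfieldE(1)[OF L]]
    by (intro subring_sum_closed[OF subfieldE(1)[OF L]]) (simp add: subset_iff)
  then show "C.Span K (map v [0..<n]) = L"
    using basis unfolding set_eq_iff mem_Span_map_upt_iff[OF K] by metis
qed

lemma ext_degree_iff_dimension:
  "ext_degree K L n \<longleftrightarrow>
    subfield K complex_ring \<and> subfield L complex_ring \<and> K \<subseteq> L \<and> C.dimension n K L"
proof (cases "subfield K complex_ring \<and> subfield L complex_ring \<and> K \<subseteq> L")
  case True
  then have K: "subfield K complex_ring" and L: "subfield L complex_ring" and "K \<subseteq> L"
    by auto
  show ?thesis
    unfolding ext_degree_def subfield_C_iff_subfield dimension_iff_basis[OF K]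
      independent_map_upt_iff[OF K] Span_map_upt_eq_iff[OF K L \<open>K \<subseteq> L\<close>]
    by (simp only: conj_assoc)
qed (auto simp: ext_degree_def subfield_C_iff_subfield)

section \<open>Radical extensions\<close>

lemma subring_power_closed:
  assumes "subring S complex_ring" "x \<in> S"
  shows "x ^ n \<in> S"
  using assms subringE(3,6)[OF assms(1)] by (induction n) auto

lemma subring_minus_one: "subring S complex_ring \<Longrightarrow> -1 \<in> S"
  using subringE(3,5) by fastforce

lemma subfield_divide_closed:
  assumes "subfield F complex_ring" "x \<in> F" "y \<in> F"
  shows "x / y \<in> F"
  using assms unfolding subfield_C_iff_subfield[symmetric] subfield_C_def
  by (cases "y = 0") (auto simp: divide_inverse)

lemma eval_eq_poly_Poly_rev: "C.eval p x = poly (Poly (rev p)) x"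
proof (induction p)
  case (Cons a p)
  have "poly (Poly (rev (a # p))) x = poly (Poly (rev p)) x + x ^ length p * a"
    by (simp add: Poly_append poly_monom)
  then show ?case
    using Cons by (simp add: mult.commute)
qed simp

lemma
  assumes "p \<noteq> []" "hd p \<noteq> 0"
  shows degree_Poly_rev: "Polynomial.degree (Poly (rev p)) = length p - 1"
    and lead_coeff_Poly_rev: "Polynomial.lead_coeff (Poly (rev p)) = hd p"
    and coeff_0_Poly_rev: "Polynomial.coeff (Poly (rev p)) 0 = last p"
proof -
  have coeffs: "coeffs (Poly (rev p)) = rev p"
    using assms by (cases p) (auto simp: coeffs_Poly strip_while_def)
  show "Polynomial.degree (Poly (rev p)) = length p - 1"
    using coeffs by (simp add: degree_eq_length_coeffs)
  show "Polynomial.lead_coeff (Poly (rev p)) = hd p"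
    using coeffs assms by (metis last_coeffs_eq_coeff_degree last_rev coeffs_eq_Nil rev_is_Nil_conv)
  show "Polynomial.coeff (Poly (rev p)) 0 = last p"
    using assms(1) by (simp add: nth_default_def hd_rev[symmetric] hd_conv_nth)
qed

text \<open>\<open>(-1) ^ degree p * coeff p 0\<close> is the product of the roots of \<open>p\<close>.\<close>

lemma monic_poly_radical_roots:
  fixes p :: "complex poly"
  assumes "Polynomial.lead_coeff p = 1" and roots: "\<And>x. poly p x = 0 \<Longrightarrow> x ^ N = \<sigma>"
  shows "((-1) ^ Polynomial.degree p * Polynomial.coeff p 0) ^ N = \<sigma> ^ Polynomial.degree p"
proof -
  have "p \<noteq> 0"
    using assms(1) by auto
  then obtain A where A: "size A = Polynomial.degree p"
    "p = smult (Polynomial.lead_coeff p) (\<Prod>x\<in>#A. [:-x, 1:])"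
    using alg_closed_imp_factorization by blast
  then have p: "p = (\<Prod>x\<in>#A. [:-x, 1:])"
    using assms(1) by simp
  have "Polynomial.coeff p 0 = (\<Prod>x\<in>#A. - x)"
    unfolding poly_0_coeff_0[symmetric] by (subst p) (simp add: poly_prod_mset)
  also have "\<dots> = (-1) ^ size A * prod_mset A"
    by (induction A) auto
  finally have "(-1) ^ Polynomial.degree p * Polynomial.coeff p 0 = prod_mset A"
    using A(1) by (simp flip: power_add mult_2 add: power_mult)
  moreover have "x ^ N = \<sigma>" if "x \<in># A" for x
    using that by (intro roots) (auto simp: p poly_prod_mset prod_mset_zero_iff)
  then have "prod_mset A ^ N = \<sigma> ^ size A"
    by (induction A) (auto simp: power_mult_distrib)
  ultimately show ?thesis
    using A(1) by simp
qed

text \<open>The coefficient list of \<open>X ^ N - \<sigma>\<close>, leading coefficient first as in HOL-Algebra.\<close>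

definition radical_poly :: "nat \<Rightarrow> complex \<Rightarrow> complex list" where
  "radical_poly N \<sigma> = 1 # replicate (N - 1) 0 @ [- \<sigma>]"

lemma radical_poly_carrier:
  assumes "subring F complex_ring" "\<sigma> \<in> F"
  shows "radical_poly N \<sigma> \<in> carrier (univ_poly complex_ring F)"
  unfolding univ_poly_carrier[symmetric] polynomial_def radical_poly_def
  using assms subringE(2,3,5)[OF assms(1)] by auto

lemma eval_radical_poly:
  assumes "0 < N"
  shows "C.eval (radical_poly N \<sigma>) x = x ^ N - \<sigma>"
proof -
  have "C.eval (replicate (N - 1) \<zero>\<^bsub>complex_ring\<^esub> @ [- \<sigma>]) x = C.eval [- \<sigma>] x"
    by (rule C.eval_replicate) auto
  then show ?thesis
    using assms by (simp add: radical_poly_def)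
qed

lemma degree_radical_poly: "0 < N \<Longrightarrow> Polynomials.degree (radical_poly N \<sigma>) = N"
  by (simp add: radical_poly_def)

lemma algebraic_radical:
  assumes "subring F complex_ring" "\<sigma> \<in> F" "0 < N" "\<tau> ^ N = \<sigma>"
  shows "(C.algebraic over F) \<tau>"
proof (rule C.algebraicI[OF radical_poly_carrier[OF assms(1,2)]])
  show "radical_poly N \<sigma> \<noteq> []"
    by (simp add: radical_poly_def)
  show "C.eval (radical_poly N \<sigma>) \<tau> = \<zero>\<^bsub>complex_ring\<^esub>"
    using assms(3,4) by (simp add: eval_radical_poly)
qed

lemma Irr_ne_Nil:
  assumes "subfield F complex_ring" "(C.algebraic over F) x"
  shows "C.Irr F x \<noteq> []"
  using C.IrrE(1-2)[OF assms(1) _ assms(2)] unfolding ring_irreducible_def univ_poly_zero by auto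

lemma Irr_degree_pos:
  assumes "subfield F complex_ring" "(C.algebraic over F) x"
  shows "0 < Polynomials.degree (C.Irr F x)"
proof (rule ccontr)
  assume "\<not> 0 < Polynomials.degree (C.Irr F x)"
  with Irr_ne_Nil[OF assms] have "length (C.Irr F x) = 1"
    by (cases "C.Irr F x") auto
  then have "C.Irr F x = [1]"
    using C.IrrE(3)[OF assms(1) _ assms(2)] by (cases "C.Irr F x") auto
  then show False
    using C.IrrE(4)[OF assms(1) _ assms(2)] by simp
qed

lemma
  assumes F: "subfield F complex_ring" and "\<sigma> \<in> F" "0 < N" "\<tau> ^ N = \<sigma>"
  shows Irr_radical_degree_le: "Polynomials.degree (C.Irr F \<tau>) \<le> N"
    and Irr_radical_roots: "C.eval (C.Irr F \<tau>) x = 0 \<Longrightarrow> x ^ N = \<sigma>"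
proof -
  have sr: "subring F complex_ring"
    using F by (rule subfieldE(1))
  note alg = algebraic_radical[OF sr assms(2-4)]
  have dvd: "C.Irr F \<tau> pdivides\<^bsub>complex_ring\<^esub> radical_poly N \<sigma>"
    using assms by (intro C.Irr_minimal[OF F _ alg radical_poly_carrier[OF sr]])
      (auto simp: eval_radical_poly)
  have "Polynomials.degree (C.Irr F \<tau>) \<le> Polynomials.degree (radical_poly N \<sigma>)"
    using C.IrrE(1)[OF F _ alg] radical_poly_carrier[OF sr \<open>\<sigma> \<in> F\<close>]
    by (intro C.pdivides_imp_degree_le[OF sr _ _ _ dvd]) (auto simp: radical_poly_def)
  then show "Polynomials.degree (C.Irr F \<tau>) \<le> N"
    using degree_radical_poly[OF \<open>0 < N\<close>, of \<sigma>] by linarith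
  obtain r where "radical_poly N \<sigma> = C.poly_mult (C.Irr F \<tau>) r"
    using dvd unfolding pdivides_def factor_def univ_poly_mult by blast
  then have "C.eval (radical_poly N \<sigma>) x = C.eval (C.Irr F \<tau>) x * C.eval r x"
    using C.eval_poly_mult[of "C.Irr F \<tau>" r x] by simp
  then show "C.eval (C.Irr F \<tau>) x = 0 \<Longrightarrow> x ^ N = \<sigma>"
    using \<open>0 < N\<close> by (simp add: eval_radical_poly)
qed

lemma Irr_radical_norm:
  assumes F: "subfield F complex_ring" and "\<sigma> \<in> F" "0 < N" "\<tau> ^ N = \<sigma>"
  shows "\<exists>P\<in>F. P ^ N = \<sigma> ^ Polynomials.degree (C.Irr F \<tau>)"
proof -
  have sr: "subring F complex_ring"
    using F by (rule subfieldE(1))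
  note alg = algebraic_radical[OF sr assms(2-4)]
  define p where "p = Poly (rev (C.Irr F \<tau>))"
  have lead: "hd (C.Irr F \<tau>) = 1"
    using C.IrrE(3)[OF F _ alg] by simp
  have ne: "C.Irr F \<tau> \<noteq> []" and "hd (C.Irr F \<tau>) \<noteq> 0"
    using Irr_ne_Nil[OF F alg] lead by simp_all
  note Poly_rev = degree_Poly_rev[OF this] lead_coeff_Poly_rev[OF this] coeff_0_Poly_rev[OF this]
  have deg: "Polynomial.degree p = Polynomials.degree (C.Irr F \<tau>)"
    and coeff: "Polynomial.coeff p 0 = last (C.Irr F \<tau>)"
    by (simp_all only: p_def Poly_rev(1,3))
  have "Polynomial.lead_coeff p = 1"
    by (simp only: p_def Poly_rev(2) lead)
  moreover have "x ^ N = \<sigma>" if "poly p x = 0" for x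
    using that Irr_radical_roots[OF assms] by (simp add: p_def eval_eq_poly_Poly_rev)
  ultimately have "((-1) ^ Polynomial.degree p * last (C.Irr F \<tau>)) ^ N = \<sigma> ^ Polynomial.degree p"
    using monic_poly_radical_roots[of p N \<sigma>] unfolding coeff by blast
  moreover have "last (C.Irr F \<tau>) \<in> F"
    using C.IrrE(1)[OF F _ alg] ne
    unfolding univ_poly_carrier[symmetric] polynomial_def by auto
  then have "(-1) ^ Polynomial.degree p * last (C.Irr F \<tau>) \<in> F"
    using subringE(6)[OF sr] subring_power_closed[OF sr subring_minus_one[OF sr]] by simp
  ultimately show ?thesis
    unfolding deg by blast
qed

lemma Rats_subfield: "subfield (\<rat> :: complex set) complex_ring"
  unfolding subfield_C_iff_subfield[symmetric] subfield_C_def by auto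

lemma Irr_degree_le_dimension:
  assumes K: "subfield K complex_ring" and F: "subring F complex_ring"
    and dim: "C.dimension d K F" and "x \<in> F" and alg: "(C.algebraic over K) x"
  shows "Polynomials.degree (C.Irr K x) \<le> d"
proof -
  have "set (C.exp_base x (Polynomials.degree (C.Irr K x))) \<subseteq> F"
    using subring_power_closed[OF F \<open>x \<in> F\<close>] by (auto simp: C.exp_base_def)
  then show ?thesis
    using C.independent_length_le_dimension[OF K dim C.exp_base_independent[OF K _ alg]]
    by (simp add: C.exp_base_def)
qed

lemma Rats_power_eq_two_power_dvd:
  assumes "(P::complex) \<in> \<rat>" "0 < N" "P ^ N = 2 ^ m"
  shows "N dvd m"
proof -
  obtain a b :: int where "0 < b" "P = of_int a / of_int b"
    using Rats_cases'[OF assms(1)] by metis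
  then have "(of_int a :: complex) = P * of_int b"
    by simp
  then have "(of_int a :: complex) ^ N = 2 ^ m * of_int b ^ N"
    using assms(3) by (simp add: power_mult_distrib)
  then have "(of_int (a ^ N) :: complex) = of_int (2 ^ m * b ^ N)"
    by simp
  then have eq: "a ^ N = 2 ^ m * b ^ N"
    by (simp only: of_int_eq_iff)
  have "b \<noteq> 0"
    using \<open>0 < b\<close> by simp
  moreover have "a \<noteq> 0"
    using eq \<open>b \<noteq> 0\<close> \<open>0 < N\<close> by (auto simp: power_0_left)
  moreover have "prime_elem (2::int)"
    by simp
  ultimately have "N * multiplicity 2 a = m + N * multiplicity (2::int) b"
    using arg_cong[OF eq, of "multiplicity 2"]
    by (simp add: prime_elem_multiplicity_power_distrib prime_elem_multiplicity_mult_distrib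
        multiplicity_prime_power)
  then show ?thesis
    by (metis dvd_add_left_iff dvd_triv_left)
qed

lemma degree_Irr_Rats_root_of_two:
  assumes "0 < N" "\<sigma> ^ N = 2"
  shows "Polynomials.degree (C.Irr \<rat> \<sigma>) = N"
proof -
  have two: "(2::complex) \<in> \<rat>"
    by simp
  have alg: "(C.algebraic over \<rat>) \<sigma>"
    using algebraic_radical[OF subfieldE(1)[OF Rats_subfield] two assms] .
  obtain P :: complex where "P \<in> \<rat>" "P ^ N = 2 ^ Polynomials.degree (C.Irr \<rat> \<sigma>)"
    using Irr_radical_norm[OF Rats_subfield two assms] by blast
  then have "N dvd Polynomials.degree (C.Irr \<rat> \<sigma>)"
    using Rats_power_eq_two_power_dvd \<open>0 < N\<close> by blast
  moreover have "0 < Polynomials.degree (C.Irr \<rat> \<sigma>)"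
    using Irr_degree_pos[OF Rats_subfield alg] .
  moreover have "Polynomials.degree (C.Irr \<rat> \<sigma>) \<le> N"
    using Irr_radical_degree_le[OF Rats_subfield two assms] .
  ultimately show ?thesis
    using dvd_imp_le le_antisym by blast
qed

lemma root_of_two_le_dimension:
  assumes F: "subfield F complex_ring" and "C.dimension d \<rat> F" "\<sigma> \<in> F" "0 < N" "\<sigma> ^ N = 2"
  shows "N \<le> d"
proof -
  have "(C.algebraic over \<rat>) \<sigma>"
    using algebraic_radical[OF subfieldE(1)[OF Rats_subfield] _ assms(4,5)] by simp
  then have "Polynomials.degree (C.Irr \<rat> \<sigma>) \<le> d"
    by (rule Irr_degree_le_dimension[OF Rats_subfield subfieldE(1)[OF F] assms(2,3)])
  then show ?thesis
    using degree_Irr_Rats_root_of_two[OF assms(4,5)] by simp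
qed

text \<open>If the minimal polynomial had degree \<open>m < p\<close>, the product \<open>P \<in> F\<close> of its roots
  (\<open>P ^ p = \<sigma> ^ m\<close>) and a Bezout relation \<open>m u = p v + 1\<close> would make \<open>P ^ u / \<sigma> ^ v\<close>
  a \<open>p\<close>-th root of \<open>\<sigma>\<close> in \<open>F\<close>.\<close>

lemma Irr_radical_prime_degree:
  assumes F: "subfield F complex_ring" and p: "prime p" and "\<sigma> \<in> F" "\<tau> ^ p = \<sigma>"
    and not_power: "\<forall>w\<in>F. w ^ p \<noteq> \<sigma>"
  shows "Polynomials.degree (C.Irr F \<tau>) = p"
proof (rule ccontr)
  define m where "m = Polynomials.degree (C.Irr F \<tau>)"
  assume "m \<noteq> p"
  have "0 < p"
    using p by (simp add: prime_gt_0_nat)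
  then have "m < p"
    using \<open>m \<noteq> p\<close> Irr_radical_degree_le[OF F \<open>\<sigma> \<in> F\<close> _ \<open>\<tau> ^ p = \<sigma>\<close>] unfolding m_def by simp
  moreover have "0 < m"
    unfolding m_def
    using Irr_degree_pos[OF F algebraic_radical[OF subfieldE(1)[OF F] \<open>\<sigma> \<in> F\<close> \<open>0 < p\<close> \<open>\<tau> ^ p = \<sigma>\<close>]] .
  ultimately have "\<not> p dvd m"
    by (auto dest: dvd_imp_le)
  then obtain u v where uv: "m * u = Suc (p * v)"
    using bezout_prime[OF p] by blast
  obtain P where P: "P \<in> F" "P ^ p = \<sigma> ^ m"
    using Irr_radical_norm[OF F \<open>\<sigma> \<in> F\<close> \<open>0 < p\<close> \<open>\<tau> ^ p = \<sigma>\<close>] unfolding m_def by blast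
  have "\<sigma> \<noteq> 0"
    using not_power subringE(2)[OF subfieldE(1)[OF F]] \<open>0 < p\<close> by fastforce
  have "(P ^ u / \<sigma> ^ v) ^ p = (P ^ p) ^ u / (\<sigma> ^ p) ^ v"
    by (simp add: power_divide flip: power_mult) (simp add: mult.commute)
  also have "\<dots> = \<sigma> ^ (m * u) / \<sigma> ^ (p * v)"
    using P(2) by (simp add: power_mult)
  also have "\<dots> = \<sigma>"
    using uv \<open>\<sigma> \<noteq> 0\<close> by simp
  finally show False
    using not_power subfield_divide_closed[OF F] subring_power_closed[OF subfieldE(1)[OF F]]
      P(1) \<open>\<sigma> \<in> F\<close> by blast
qed

text \<open>Adjoin a \<open>p\<close>-th root of some \<open>\<sigma> \<in> F\<close> with \<open>\<sigma> ^ (p ^ j) = 2\<close> and \<open>j\<close> maximal; \<open>j\<close> is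
  bounded because \<open>\<rat>(\<sigma>)\<close> has degree \<open>p ^ j\<close> over \<open>\<rat>\<close>.\<close>

lemma exists_prime_degree_simple_extension:
  assumes F: "subfield F complex_ring" and "\<rat> \<subseteq> F" and dim: "C.dimension d \<rat> F"
    and p: "prime (p::nat)"
  shows "\<exists>\<tau>. (C.algebraic over F) \<tau> \<and> C.dimension p F (C.simple_extension F \<tau>)"
proof -
  have "1 < p"
    using p by (rule prime_gt_1_nat)
  define J where "J = {j. \<exists>\<sigma>\<in>F. \<sigma> ^ (p ^ j) = 2}"
  have "0 \<in> J"
    unfolding J_def using \<open>\<rat> \<subseteq> F\<close> by (auto intro!: bexI[of _ 2])
  have "j < d" if j: "j \<in> J" for j
  proof -
    obtain \<sigma> where "\<sigma> \<in> F" "\<sigma> ^ (p ^ j) = 2"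
      using j unfolding J_def by blast
    then have "p ^ j \<le> d"
      using root_of_two_le_dimension[OF F dim] \<open>1 < p\<close> by simp
    moreover have "j < p ^ j"
      using less_exp[of j] power_mono[of 2 p j] \<open>1 < p\<close> by linarith
    ultimately show ?thesis
      by linarith
  qed
  then have "finite J"
    by (meson finite_nat_set_iff_bounded)
  define j where "j = Max J"
  have "j \<in> J" and "Suc j \<notin> J"
    using Max_in[OF \<open>finite J\<close>] Max_ge[OF \<open>finite J\<close>, of "Suc j"] \<open>0 \<in> J\<close>
    unfolding j_def by auto
  obtain \<sigma> where \<sigma>: "\<sigma> \<in> F" "\<sigma> ^ (p ^ j) = 2"
    using \<open>j \<in> J\<close> unfolding J_def by auto
  have not_power: "\<forall>w\<in>F. w ^ p \<noteq> \<sigma>"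
  proof (intro ballI notI)
    fix w assume "w \<in> F" "w ^ p = \<sigma>"
    then have "w ^ (p ^ Suc j) = 2"
      using \<sigma>(2) by (simp add: power_mult)
    then show False
      using \<open>Suc j \<notin> J\<close> \<open>w \<in> F\<close> unfolding J_def by blast
  qed
  obtain \<tau> where "\<tau> ^ p = \<sigma>"
    using nth_root_exists[of p \<sigma>] \<open>1 < p\<close> by auto
  moreover from this have alg: "(C.algebraic over F) \<tau>"
    using algebraic_radical[OF subfieldE(1)[OF F] \<sigma>(1), of p \<tau>] \<open>1 < p\<close> by simp
  ultimately have "C.dimension p F (C.simple_extension F \<tau>)"
    using C.dimension_simple_extension[OF F _ alg] Irr_radical_prime_degree[OF F p \<sigma>(1) _ not_power]
    by simp
  with alg show ?thesis
    by blast
qed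

section \<open>Extensions of every degree and their composita\<close>

lemma
  assumes F: "subfield F complex_ring" and dim: "C.dimension n F (C.finite_extension F xs)"
  shows algebraic_if_dimension_finite_extension: "\<And>x. x \<in> set xs \<Longrightarrow> (C.algebraic over F) x"
    and subfield_if_dimension_finite_extension: "subfield (C.finite_extension F xs) complex_ring"
proof -
  show alg: "(C.algebraic over F) x" if "x \<in> set xs" for x
    using C.finite_extension_finite_dimension(2)[OF F _ C.finite_dimensionI[OF dim]] that by simp
  show "subfield (C.finite_extension F xs) complex_ring"
    using C.finite_extension_is_subfield[OF F _ alg] by simp
qed

lemma exists_finite_extension_of_degree:
  assumes "subfield F complex_ring" "\<rat> \<subseteq> F" "C.finite_dimension \<rat> F" "0 < n"
  shows "\<exists>xs. C.dimension n F (C.finite_extension F xs)"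
  using assms
proof (induction n arbitrary: F rule: less_induct)
  case (less n F)
  then have F: "subfield F complex_ring"
    by blast
  show ?case
  proof (cases "n = 1")
    case True
    then show ?thesis
      using C.dimension_one[OF F] by (intro exI[of _ "[]"]) simp
  next
    case False
    then obtain p k where p: "prime p" and n: "n = p * k"
      using prime_factor_nat by (metis dvdE)
    then have "0 < k" "k < n"
      using \<open>0 < n\<close> prime_gt_1_nat[OF p] by auto
    obtain d where d: "C.dimension d \<rat> F"
      using \<open>C.finite_dimension \<rat> F\<close> by blast
    obtain \<tau> where alg: "(C.algebraic over F) \<tau>" and dim: "C.dimension p F (C.simple_extension F \<tau>)"
      using exists_prime_degree_simple_extension[OF F \<open>\<rat> \<subseteq> F\<close> d p] by blast
    define E where "E = C.simple_extension F \<tau>"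
    have E: "subfield E complex_ring"
      unfolding E_def using C.simple_extension_is_subfield[OF F _] alg by simp
    have "F \<subseteq> E"
      unfolding E_def by (rule C.simple_extension_incl) auto
    have "C.dimension (d * p) \<rat> E"
      using C.telescopic_base[OF Rats_subfield F d dim] unfolding E_def .
    then obtain xs where xs: "C.dimension k E (C.finite_extension E xs)"
      using less.IH[OF \<open>k < n\<close> E _ C.finite_dimensionI \<open>0 < k\<close>] \<open>\<rat> \<subseteq> F\<close> \<open>F \<subseteq> E\<close> by blast
    have "C.finite_extension F (xs @ [\<tau>]) = C.finite_extension E xs"
      unfolding E_def by simp
    then have "C.dimension n F (C.finite_extension F (xs @ [\<tau>]))"
      using C.telescopic_base[OF F E dim[folded E_def] xs] n by simp
    then show ?thesis
      by blast
  qed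
qed

lemma Irr_degree_antimono:
  assumes E: "subfield E complex_ring" and L: "subfield L complex_ring" and "E \<subseteq> L"
    and alg: "(C.algebraic over E) x"
  shows "Polynomials.degree (C.Irr L x) \<le> Polynomials.degree (C.Irr E x)"
proof -
  have algL: "(C.algebraic over L) x"
    using C.algebraic_mono[OF \<open>E \<subseteq> L\<close> alg] .
  have Irr_E: "C.Irr E x \<in> carrier (univ_poly complex_ring L)"
    using C.IrrE(1)[OF E _ alg] \<open>E \<subseteq> L\<close>
    unfolding univ_poly_carrier[symmetric] polynomial_def by auto
  have "C.Irr L x pdivides\<^bsub>complex_ring\<^esub> C.Irr E x"
    using C.IrrE(4)[OF E _ alg] by (intro C.Irr_minimal[OF L _ algL Irr_E]) simp_all
  then show ?thesis
    using C.IrrE(1)[OF L _ algL] Irr_ne_Nil[OF E alg]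
    by (intro C.pdivides_imp_degree_le[OF subfieldE(1)[OF L] _ Irr_E]) simp_all
qed

lemma dimension_finite_extension_Cons:
  assumes E: "subfield E complex_ring" and dim: "C.dimension a E (C.finite_extension E xs)"
    and alg: "(C.algebraic over E) x"
  shows "C.dimension (a * Polynomials.degree (C.Irr (C.finite_extension E xs) x)) E
    (C.finite_extension E (x # xs))"
proof -
  have E': "subfield (C.finite_extension E xs) complex_ring"
    using subfield_if_dimension_finite_extension[OF E dim] .
  have "E \<subseteq> C.finite_extension E xs"
    by (rule C.finite_extension_incl) auto
  then have "(C.algebraic over C.finite_extension E xs) x"
    using C.algebraic_mono alg by blast
  then show ?thesis
    using C.telescopic_base[OF E E' dim C.dimension_simple_extension[OF E']] by simp
qed

lemma dimension_finite_extension_base_change_le: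
  assumes E: "subfield E complex_ring" and L: "subfield L complex_ring" and "E \<subseteq> L"
  shows "C.dimension a E (C.finite_extension E xs) \<Longrightarrow> C.dimension b L (C.finite_extension L xs)
    \<Longrightarrow> b \<le> a"
proof (induction xs arbitrary: a b)
  case Nil
  then have "a = 1" and "b = 1"
    using C.dimension_is_inj[OF E _ C.dimension_one[OF E]] C.dimension_is_inj[OF L _ C.dimension_one[OF L]]
    by simp_all
  then show ?case
    by simp
next
  case (Cons x xs)
  have algE: "(C.algebraic over E) y" if "y \<in> set (x # xs)" for y
    using algebraic_if_dimension_finite_extension[OF E Cons.prems(1) that] .
  then obtain a' where a': "C.dimension a' E (C.finite_extension E xs)"
    using C.finite_extension_finite_dimension(1)[OF E, of xs] by fastforce
  have algL: "(C.algebraic over L) y" if "y \<in> set (x # xs)" for y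
    using C.algebraic_mono[OF \<open>E \<subseteq> L\<close> algE[OF that]] .
  then obtain b' where b': "C.dimension b' L (C.finite_extension L xs)"
    using C.finite_extension_finite_dimension(1)[OF L, of xs] by fastforce
  have "E \<subseteq> C.finite_extension E xs"
    by (rule C.finite_extension_incl) auto
  have "a = a' * Polynomials.degree (C.Irr (C.finite_extension E xs) x)"
    using C.dimension_is_inj[OF E Cons.prems(1) dimension_finite_extension_Cons[OF E a' algE]] by simp
  moreover have "b = b' * Polynomials.degree (C.Irr (C.finite_extension L xs) x)"
    using C.dimension_is_inj[OF L Cons.prems(2) dimension_finite_extension_Cons[OF L b' algL]] by simp
  moreover have "Polynomials.degree (C.Irr (C.finite_extension L xs) x)
      \<le> Polynomials.degree (C.Irr (C.finite_extension E xs) x)"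
    using \<open>E \<subseteq> C.finite_extension E xs\<close> C.algebraic_mono algE C.mono_finite_extension[OF \<open>E \<subseteq> L\<close>]
    by (intro Irr_degree_antimono subfield_if_dimension_finite_extension[OF E a']
        subfield_if_dimension_finite_extension[OF L b']) auto
  ultimately show ?case
    using Cons.IH[OF a' b'] by (simp add: mult_le_mono)
qed

lemma compositum_upper: "L \<subseteq> compositum L L'" "L' \<subseteq> compositum L L'"
  unfolding compositum_def by auto

lemma compositum_commute: "compositum L L' = compositum L' L"
  unfolding compositum_def by (simp add: Un_commute)

lemma subfield_C_compositum: "subfield_C (compositum L L')"
  unfolding compositum_def subfield_C_def by blast

lemma compositum_finite_extension:
  assumes E: "subfield E complex_ring" and L: "subfield L complex_ring" and "E \<subseteq> L"
    and alg: "\<And>x. x \<in> set xs \<Longrightarrow> (C.algebraic over E) x"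
  shows "compositum L (C.finite_extension E xs) = C.finite_extension L xs"
proof (rule antisym)
  have "subfield_C (C.finite_extension L xs)"
    unfolding subfield_C_iff_subfield using C.algebraic_mono[OF \<open>E \<subseteq> L\<close>] alg
    by (intro C.finite_extension_is_subfield[OF L]) auto
  moreover have "L \<union> C.finite_extension E xs \<subseteq> C.finite_extension L xs"
    using C.finite_extension_incl[of L xs] C.mono_finite_extension[OF \<open>E \<subseteq> L\<close>] by auto
  ultimately show "compositum L (C.finite_extension E xs) \<subseteq> C.finite_extension L xs"
    unfolding compositum_def by (intro Inter_lower) simp
next
  show "C.finite_extension L xs \<subseteq> compositum L (C.finite_extension E xs)"
  proof (rule C.finite_extension_subring_incl)
    show "subring (compositum L (C.finite_extension E xs)) complex_ring"
      using subfield_C_compositum subfieldE(1) unfolding subfield_C_iff_subfield by blast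
    show "L \<subseteq> compositum L (C.finite_extension E xs)"
      by (rule compositum_upper)
    have "set xs \<subseteq> C.finite_extension E xs"
      by (rule C.finite_extension_mem[OF subfieldE(1)[OF E]]) simp
    then show "set xs \<subseteq> compositum L (C.finite_extension E xs)"
      using compositum_upper(2) by blast
  qed
qed

lemma coprime_dimension_compositum:
  assumes E: "subfield E complex_ring"
    and ys: "C.dimension a E (C.finite_extension E ys)"
    and xs: "C.dimension b E (C.finite_extension E xs)"
    and "coprime a b"
  shows "C.dimension (a * b) E (compositum (C.finite_extension E ys) (C.finite_extension E xs))"
proof -
  define L where "L = C.finite_extension E ys"
  define M where "M = compositum L (C.finite_extension E xs)"
  have L: "subfield L complex_ring" and L': "subfield (C.finite_extension E xs) complex_ring"
    unfolding L_def using subfield_if_dimension_finite_extension[OF E] ys xs by blast+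
  have "E \<subseteq> L" "E \<subseteq> C.finite_extension E xs"
    unfolding L_def by (rule C.finite_extension_incl; simp)+
  have M_L: "M = C.finite_extension L xs"
    unfolding M_def using compositum_finite_extension[OF E L \<open>E \<subseteq> L\<close>]
      algebraic_if_dimension_finite_extension[OF E xs] by blast
  have M_L': "M = C.finite_extension (C.finite_extension E xs) ys"
    unfolding M_def L_def compositum_commute[of "C.finite_extension E ys"]
    using compositum_finite_extension[OF E L' \<open>E \<subseteq> C.finite_extension E xs\<close>]
      algebraic_if_dimension_finite_extension[OF E ys] by blast
  obtain m where m: "C.dimension m L M"
    unfolding M_L using C.finite_extension_finite_dimension(1)[OF L, of xs]
      C.algebraic_mono[OF \<open>E \<subseteq> L\<close>] algebraic_if_dimension_finite_extension[OF E xs] by fastforce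
  obtain m' where m': "C.dimension m' (C.finite_extension E xs) M"
    unfolding M_L' using C.finite_extension_finite_dimension(1)[OF L', of ys]
      C.algebraic_mono[OF \<open>E \<subseteq> C.finite_extension E xs\<close>]
      algebraic_if_dimension_finite_extension[OF E ys] by fastforce
  have "m \<le> b"
    using dimension_finite_extension_base_change_le[OF E L \<open>E \<subseteq> L\<close> xs] m unfolding M_L .
  have dim_M: "C.dimension (a * m) E M"
    using C.telescopic_base[OF E L ys[folded L_def] m] .
  then have "a * m = b * m'"
    using C.dimension_is_inj[OF E _ C.telescopic_base[OF E L' xs m']] by blast
  then have "b dvd m"
    using \<open>coprime a b\<close> by (metis coprime_commute coprime_dvd_mult_right_iff dvd_triv_left)
  moreover have "m \<noteq> 0"
  proof
    assume "m = 0"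
    then have "M = {0}"
      using C.dimension_zero[OF L] m by simp
    have "1 \<in> L"
      using subringE(3)[OF subfieldE(1)[OF L]] by simp
    then have "1 \<in> M"
      unfolding M_def by (rule subsetD[OF compositum_upper(1)])
    with \<open>M = {0}\<close> show False
      by simp
  qed
  ultimately have "m = b"
    using \<open>m \<le> b\<close> by (simp add: dvd_imp_le le_antisym)
  then show ?thesis
    using dim_M unfolding M_def L_def by simp
qed

lemma ext_degree_pos: "ext_degree K L n \<Longrightarrow> 0 < n"
proof (rule ccontr)
  assume "ext_degree K L n" "\<not> 0 < n"
  then have K: "subfield K complex_ring" and L: "subfield L complex_ring" and "C.dimension 0 K L"
    unfolding ext_degree_iff_dimension by auto
  then have "L = {0}"
    using C.dimension_zero[OF K] by simp
  moreover have "1 \<in> L"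
    using subringE(3)[OF subfieldE(1)[OF L]] by simp
  ultimately show False
    by simp
qed

lemma ext_degree_mono:
  assumes "ext_degree K L m" "ext_degree K M n" "L \<subseteq> M"
  shows "m \<le> n"
proof -
  have K: "subfield K complex_ring" and "C.dimension m K L" "C.dimension n K M"
    using assms(1,2) unfolding ext_degree_iff_dimension by auto
  then obtain Us where "C.independent K Us" "length Us = m" "C.Span K Us = L"
    using C.exists_base[OF K] by blast
  moreover have "set Us \<subseteq> C.Span K Us"
    by (rule C.Span_base_incl[OF K]) simp
  ultimately show ?thesis
    using C.independent_length_le_dimension[OF K \<open>C.dimension n K M\<close>] \<open>L \<subseteq> M\<close> by blast
qed

lemma lcm_in_compositum_feasible:
  assumes "number_field K" "0 < a" "0 < b"
  shows "(a, b, lcm a b) \<in> compositum_feasible K"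
proof -
  obtain d where "ext_degree \<rat> K d"
    using assms(1) unfolding number_field_def by blast
  then have K: "subfield K complex_ring" and "\<rat> \<subseteq> K" and "C.dimension d \<rat> K"
    unfolding ext_degree_iff_dimension by auto
  define g where "g = gcd a b"
  have "gcd a b \<noteq> 0"
    using assms(2) by simp
  then obtain a' b' where "a = a' * g" and "b = b' * g" and "coprime a' b'"
    unfolding g_def using gcd_coprime_exists by blast
  then have a: "a = g * a'" and b: "b = g * b'"
    by (simp_all add: mult.commute)
  have lcm: "lcm a b = g * (a' * b')"
    unfolding a b lcm_mult_left using \<open>coprime a' b'\<close> by (simp add: lcm_coprime)
  have "0 < g" "0 < a'" "0 < b'"
    using assms(2,3) unfolding a b by simp_all
  obtain zs where zs: "C.dimension g K (C.finite_extension K zs)"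
    using exists_finite_extension_of_degree[OF K \<open>\<rat> \<subseteq> K\<close> C.finite_dimensionI \<open>0 < g\<close>]
      \<open>C.dimension d \<rat> K\<close> by blast
  define E where "E = C.finite_extension K zs"
  have E: "subfield E complex_ring"
    unfolding E_def using subfield_if_dimension_finite_extension[OF K zs] .
  have "K \<subseteq> E"
    unfolding E_def by (rule C.finite_extension_incl) auto
  have "C.dimension (d * g) \<rat> E"
    unfolding E_def using C.telescopic_base[OF Rats_subfield K \<open>C.dimension d \<rat> K\<close> zs] .
  then obtain ys xs where ys: "C.dimension a' E (C.finite_extension E ys)"
    and xs: "C.dimension b' E (C.finite_extension E xs)"
    using exists_finite_extension_of_degree[OF E _ C.finite_dimensionI] \<open>0 < a'\<close> \<open>0 < b'\<close>
      \<open>\<rat> \<subseteq> K\<close> \<open>K \<subseteq> E\<close> by (metis order_trans)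
  define L L' where "L = C.finite_extension E ys" and "L' = C.finite_extension E xs"
  have L: "subfield L complex_ring" and L': "subfield L' complex_ring"
    unfolding L_def L'_def using subfield_if_dimension_finite_extension[OF E] ys xs by blast+
  have "E \<subseteq> L" "E \<subseteq> L'"
    unfolding L_def L'_def by (rule C.finite_extension_incl; simp)+
  have E_dim: "C.dimension g K E"
    using zs unfolding E_def .
  have "ext_degree K L a"
    unfolding ext_degree_iff_dimension a L_def
    using K L[unfolded L_def] \<open>K \<subseteq> E\<close> \<open>E \<subseteq> L\<close>[unfolded L_def] C.telescopic_base[OF K E E_dim ys]
    by blast
  moreover have "ext_degree K L' b"
    unfolding ext_degree_iff_dimension b L'_def
    using K L'[unfolded L'_def] \<open>K \<subseteq> E\<close> \<open>E \<subseteq> L'\<close>[unfolded L'_def] C.telescopic_base[OF K E E_dim xs]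
    by blast
  moreover have "ext_degree K (compositum L L') (lcm a b)"
    unfolding ext_degree_iff_dimension lcm L_def L'_def
    using K subfield_C_compositum[unfolded subfield_C_iff_subfield] \<open>K \<subseteq> E\<close> \<open>E \<subseteq> L\<close>[unfolded L_def]
      compositum_upper(1) C.telescopic_base[OF K E E_dim coprime_dimension_compositum[OF E ys xs \<open>coprime a' b'\<close>]]
    by blast
  ultimately show ?thesis
    unfolding compositum_feasible_def by blast
qed

section \<open>Irreducible triplets\<close>

lemma compositum_feasible_bounds:
  assumes "(x, y, z) \<in> compositum_feasible K"
  shows "0 < x" "0 < y" "x \<le> z" "y \<le> z"
proof -
  obtain L L' where "ext_degree K L x" "ext_degree K L' y" "ext_degree K (compositum L L') z"
    using assms unfolding compositum_feasible_def by blast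
  then show "0 < x" "0 < y" "x \<le> z" "y \<le> z"
    using ext_degree_pos ext_degree_mono compositum_upper by blast+
qed

lemma compositum_feasible_swap:
  "(x, y, z) \<in> compositum_feasible K \<Longrightarrow> (y, x, z) \<in> compositum_feasible K"
  unfolding compositum_feasible_def by (simp, metis compositum_commute)

lemma triplet_mult_simp [simp]:
  "triplet_mult (a1, b1, c1) (a2, b2, c2) = (a1 * a2, b1 * b2, c1 * c2)"
  by (simp add: triplet_mult_def)

lemma triplet_reducibleE:
  assumes "triplet_reducible K (a, b, c)"
  obtains a1 b1 c1 a2 b2 c2
  where "(a1, b1, c1) \<in> compositum_feasible K" "(a1, b1, c1) \<noteq> (1, 1, 1)"
    and "(a2, b2, c2) \<in> compositum_feasible K" "(a2, b2, c2) \<noteq> (1, 1, 1)"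
    and "a = a1 * a2" "b = b1 * b2" "c = c1 * c2"
proof -
  obtain y z where "y \<in> compositum_feasible K - {(1, 1, 1)}" "z \<in> compositum_feasible K - {(1, 1, 1)}"
    and "(a, b, c) = triplet_mult y z"
    using assms unfolding triplet_reducible_def by blast
  then show thesis
    using that by (cases y; cases z) auto
qed

lemma triplet_reducible_swap:
  assumes "triplet_reducible K (a, b, c)"
  shows "triplet_reducible K (b, a, c)"
proof -
  obtain a1 b1 c1 a2 b2 c2
    where "(a1, b1, c1) \<in> compositum_feasible K" "(a1, b1, c1) \<noteq> (1, 1, 1)"
      and "(a2, b2, c2) \<in> compositum_feasible K" "(a2, b2, c2) \<noteq> (1, 1, 1)"
      and "a = a1 * a2" "b = b1 * b2" "c = c1 * c2"
    using triplet_reducibleE[OF assms] .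
  moreover have "(b, a, c) \<in> compositum_feasible K"
    using assms compositum_feasible_swap unfolding triplet_reducible_def by blast
  ultimately show ?thesis
    unfolding triplet_reducible_def using compositum_feasible_swap
    by (intro conjI exI[of _ "(b1, a1, c1)"] exI[of _ "(b2, a2, c2)"]) auto
qed

lemma triplet_irreducible_if_prime:
  assumes "(a, b, c) \<in> compositum_feasible K" "c = 1 \<or> prime c"
  shows "triplet_irreducible K (a, b, c)"
proof -
  have "\<not> triplet_reducible K (a, b, c)"
  proof
    assume "triplet_reducible K (a, b, c)"
    then obtain a1 b1 c1 a2 b2 c2
      where "(a1, b1, c1) \<in> compositum_feasible K" "(a1, b1, c1) \<noteq> (1, 1, 1)"
        and "(a2, b2, c2) \<in> compositum_feasible K" "(a2, b2, c2) \<noteq> (1, 1, 1)"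
        and "c = c1 * c2"
      by (rule triplet_reducibleE)
    moreover from \<open>c = c1 * c2\<close> have "c1 = 1 \<or> c2 = 1"
      using assms(2) prime_product by auto
    ultimately show False
      using compositum_feasible_bounds[of a1 b1 c1 K] compositum_feasible_bounds[of a2 b2 c2 K]
      by auto
  qed
  then show ?thesis
    using assms(1) unfolding triplet_irreducible_def by blast
qed

lemma triplet_reducible_of_lcm_factors:
  assumes "number_field K" "x \<in> compositum_feasible K"
    and "x = (a1 * a2, b1 * b2, lcm a1 b1 * lcm a2 b2)" "0 < a1" "0 < b1" "0 < a2" "0 < b2"
    and "(a1, b1) \<noteq> (1, 1)" "(a2, b2) \<noteq> (1, 1)"
  shows "triplet_reducible K x"
  using assms lcm_in_compositum_feasible[OF assms(1)] unfolding triplet_reducible_def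
  by (intro conjI exI[of _ "(a1, b1, lcm a1 b1)"] exI[of _ "(a2, b2, lcm a2 b2)"]) auto

text \<open>With \<open>gcd a b = t s\<close> and \<open>b = b' gcd a b\<close>:
  \<open>(a, b, lcm a b \<cdot> t) = (a, s, a) \<cdot> (1, b' t, b' t)\<close>.\<close>

lemma triplet_reducible_unless_dvd:
  assumes K: "number_field K" and feasible: "(a, b, lcm a b * t) \<in> compositum_feasible K"
    and "0 < a" "0 < b" "0 < t" "t dvd gcd a b" "a \<noteq> 1" "\<not> (b dvd a \<and> t = 1)"
  shows "triplet_reducible K (a, b, lcm a b * t)"
proof -
  obtain s where s: "gcd a b = t * s"
    using \<open>t dvd gcd a b\<close> by blast
  obtain b' where b': "b = gcd a b * b'"
    by (rule dvdE[OF gcd_dvd2])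
  have "gcd a b * lcm a b = gcd a b * (a * b')"
    by (metis b' mult.left_commute prod_gcd_lcm_nat)
  moreover have "gcd a b \<noteq> 0"
    using \<open>0 < a\<close> by simp
  ultimately have "lcm a b = a * b'"
    by (metis mult_left_cancel)
  have "s dvd a"
    using gcd_dvd1[of a b] unfolding s by (rule dvd_mult_right)
  then have "lcm a s = a"
    by (simp add: lcm_proj1_if_dvd)
  have "b' * t \<noteq> 1"
  proof
    assume "b' * t = 1"
    then have "b = gcd a b" "t = 1"
      using b' by simp_all
    then show False
      using \<open>\<not> (b dvd a \<and> t = 1)\<close> gcd_dvd1[of a b] by simp
  qed
  have "b = t * s * b'"
    using b' unfolding s .
  then have eq: "(a, b, lcm a b * t) = (a * 1, s * (b' * t), lcm a s * lcm 1 (b' * t))"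
    using \<open>lcm a b = a * b'\<close> \<open>lcm a s = a\<close> by (simp add: ac_simps)
  have "0 < s" "0 < b'"
    using \<open>0 < a\<close> \<open>0 < b\<close> s b' by (auto intro!: Nat.gr0I)
  then show ?thesis
    using \<open>0 < a\<close> \<open>0 < t\<close> \<open>a \<noteq> 1\<close> \<open>b' * t \<noteq> 1\<close>
    by (intro triplet_reducible_of_lcm_factors[OF K feasible eq]) simp_all
qed

lemma not_prime_factorization_nat:
  assumes "1 < (n::nat)" "\<not> prime n"
  obtains u v where "n = u * v" "1 < u" "1 < v"
proof -
  obtain u where "u dvd n" "u \<noteq> 1" "u \<noteq> n"
    using assms prime_nat_iff by blast
  then obtain v where "n = u * v"
    by blast
  moreover from this have "u \<noteq> 0" "v \<noteq> 0" "v \<noteq> 1"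
    using assms(1) \<open>u \<noteq> n\<close> by (metis mult_0 mult_0_right mult_1_right not_less_zero)+
  ultimately have "1 < u" "1 < v"
    using \<open>u \<noteq> 1\<close> by auto
  with \<open>n = u * v\<close> show ?thesis
    using that by blast
qed

lemma triplet_reducible_if_composite:
  assumes K: "number_field K" and feasible: "(a, b, n) \<in> compositum_feasible K"
    and shape: "(a, b) \<in> {(1, n), (n, 1), (n, n)}" and "n = u * v" "1 < u" "1 < v"
  shows "triplet_reducible K (a, b, n)"
proof -
  from shape consider "a = 1" "b = n" | "a = n" "b = 1" | "a = n" "b = n"
    by auto
  then show ?thesis
  proof cases
    case 1
    then show ?thesis
      using triplet_reducible_of_lcm_factors[OF K feasible, of 1 1 u v] assms(4-6) by simp
  next
    case 2
    then show ?thesis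
      using triplet_reducible_of_lcm_factors[OF K feasible, of u v 1 1] assms(4-6) by simp
  next
    case 3
    then show ?thesis
      using triplet_reducible_of_lcm_factors[OF K feasible, of u v u v] assms(4-6) by simp
  qed
qed

lemma triplet_irreducible_shape:
  assumes K: "number_field K" and irr: "triplet_irreducible K (a, b, c)"
    and "0 < a" "0 < b" "0 < t" "t dvd gcd a b" and c: "c = lcm a b * t"
  shows "(a, b) \<in> {(1, c), (c, 1), (c, c)} \<and> (c = 1 \<or> prime c)"
proof -
  have feasible: "(a, b, lcm a b * t) \<in> compositum_feasible K"
    and irreducible: "\<not> triplet_reducible K (a, b, lcm a b * t)"
    using irr unfolding triplet_irreducible_def c by auto
  have "a = 1 \<or> (b dvd a \<and> t = 1)"
    using triplet_reducible_unless_dvd[OF K feasible assms(3-6)] irreducible by blast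
  moreover have "b = 1 \<or> (a dvd b \<and> t = 1)"
    using triplet_reducible_unless_dvd[OF K _ assms(4,3,5)] assms(6) irreducible
      compositum_feasible_swap[OF feasible] triplet_reducible_swap
    by (metis gcd.commute lcm.commute)
  ultimately have "t = 1" and "(a, b) \<in> {(1, c), (c, 1), (c, c)}"
    using \<open>t dvd gcd a b\<close> c by (auto dest: dvd_antisym)
  moreover have "c = 1 \<or> prime c"
  proof (rule ccontr)
    assume "\<not> (c = 1 \<or> prime c)"
    moreover have "0 < c"
      using c \<open>0 < a\<close> \<open>0 < b\<close> \<open>0 < t\<close> by (simp add: lcm_pos_nat)
    ultimately obtain u v where "c = u * v" "1 < u" "1 < v"
      using not_prime_factorization_nat by (metis less_one nat_neq_iff)
    then show False
      using triplet_reducible_if_composite[OF K] feasible irreducible \<open>t = 1\<close> c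
        \<open>(a, b) \<in> {(1, c), (c, 1), (c, c)}\<close> by auto
  qed
  ultimately show ?thesis
    by blast
qed

theorem mainTheorem12:
  fixes K :: "complex set" and a b c t :: nat
  assumes "number_field K"
    and "a > 0" and "b > 0" and "t > 0"
    and "t dvd gcd a b" and "c = lcm a b * t"
  shows "triplet_irreducible K (a, b, c) \<longleftrightarrow>
    (a, b, c) = (1, 1, 1) \<or>
    (\<exists>p::nat. prime p \<and> ((a, b, c) = (1, p, p) \<or> (a, b, c) = (p, 1, p) \<or> (a, b, c) = (p, p, p)))"
proof -
  have "triplet_irreducible K (a, b, c) \<longleftrightarrow> (a, b) \<in> {(1, c), (c, 1), (c, c)} \<and> (c = 1 \<or> prime c)"
  proof
    assume "(a, b) \<in> {(1, c), (c, 1), (c, c)} \<and> (c = 1 \<or> prime c)"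
    moreover from this have "(a, b, c) \<in> compositum_feasible K"
      using lcm_in_compositum_feasible[OF assms(1-3)] by auto
    ultimately show "triplet_irreducible K (a, b, c)"
      using triplet_irreducible_if_prime by blast
  qed (rule triplet_irreducible_shape[OF assms(1) _ assms(2-6)])
  then show ?thesis
    by auto
qed

end
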